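(* Let $(V,g)$ be a Euclidean vector space of dimension $4$. Let $R$ be an algebraic curvature tensor on $V$ and $\mathring{R}$ its induced curvature operator of the second kind. (1) If $\mathring{R}\in\mathcal{C}(\alpha,1)$ with $1\le\alpha\le3$, or $\mathring{R}\in\mathcal{C}(\alpha,9\alpha^{-1}-2)$ with $3\le\alpha<9$, then $R$ has nonnegative isotropic curvature. (2) If $\mathring{R}\in\mathring{\mathcal{C}}(\alpha,1)$ with $1\le\alpha\le3$, or $\mathring{R}\in\mathring{\mathcal{C}}(\alpha,9\alpha^{-1}-2)$ with $3\le\alpha<9$, then $R$ has positive isotropic curvature.
   Context: $S^2_0(V)$ is the space of traceless symmetric two-tensors (dimension $N=9$). An algebraic curvature tensor is $R\in S^2(\wedge^2V)$ satisfying the first Bianchi identity. $\mathring{R}=\pi\circ\overline{R}:S^2_0(V)\to S^2_0(V)$ with $\overline{R}(h)_{ij}=\sum_{k,l}R_{iklj}h_{kl}$ and $\pi$ the projection onto traceless tensors. For a symmetric operator with eigenvalues $\lambda_1\le\cdots\le\lambda_N$ and average $\bar\lambda$, write $\lambda_1+\cdots+\lambda_\alpha:=\lambda_1+\cdots+\lambda_{[\alpha]}+(\alpha-[\alpha])\lambda_{[\alpha]+1}$; $\mathcal{C}(\alpha,\theta)$ ($\theta>-1$) is the cone of symmetric operators on $S^2_0(V)$ with $\alpha^{-1}(\lambda_1+\cdots+\lambda_\alpha)\ge-\theta\bar\lambda$, and $\mathring{\mathcal{C}}(\alpha,\theta)$ its interior. $R$ has nonnegative (resp. positive) isotropic curvature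 if $R_{1313}+R_{1414}+R_{2323}+R_{2424}-2R_{1234}\ge0$ (resp. $>0$) for every orthonormal four-frame $\{e_1,e_2,e_3,e_4\}$, where $R_{ijkl}=R(e_i,e_j,e_k,e_l)$. *)

theory Defs
  imports "HOL-Analysis.Analysis" "HOL-Library.Numeral_Type"
begin

text \<open>V = R^4 with its standard inner product; tensors are given by their
components in the standard orthonormal basis (indices of type 4).\<close>

type_synonym tensor4 = "4 \<Rightarrow> 4 \<Rightarrow> 4 \<Rightarrow> 4 \<Rightarrow> real"
type_synonym mat4 = "real ^ 4 ^ 4"

definition alg_curv :: "tensor4 \<Rightarrow> bool" where
  "alg_curv R \<longleftrightarrow> (\<forall>i j k l.
      R i j k l = - R j i k l \<and> R i j k l = - R i j l k \<and> R i j k l = R k l i j \<and>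
      R i j k l + R j k i l + R k i j l = 0)"

definition curv_eval :: "tensor4 \<Rightarrow> real^4 \<Rightarrow> real^4 \<Rightarrow> real^4 \<Rightarrow> real^4 \<Rightarrow> real" where
  "curv_eval R x y z w = (\<Sum>i\<in>UNIV. \<Sum>j\<in>UNIV. \<Sum>k\<in>UNIV. \<Sum>l\<in>UNIV.
      R i j k l * x$i * y$j * z$k * w$l)"

definition orthonormal4 :: "real^4 \<Rightarrow> real^4 \<Rightarrow> real^4 \<Rightarrow> real^4 \<Rightarrow> bool" where
  "orthonormal4 e1 e2 e3 e4 \<longleftrightarrow>
     (let e = [e1, e2, e3, e4] in
      \<forall>a<4. \<forall>b<4. (e!a) \<bullet> (e!b) = (if a = b then 1 else 0))"

definition isotropic_expr :: "tensor4 \<Rightarrow> real^4 \<Rightarrow> real^4 \<Rightarrow> real^4 \<Rightarrow> real^4 \<Rightarrow> real" where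
  "isotropic_expr R e1 e2 e3 e4 =
     curv_eval R e1 e3 e1 e3 + curv_eval R e1 e4 e1 e4 + curv_eval R e2 e3 e2 e3
     + curv_eval R e2 e4 e2 e4 - 2 * curv_eval R e1 e2 e3 e4"

definition nonneg_IC :: "tensor4 \<Rightarrow> bool" where
  "nonneg_IC R \<longleftrightarrow> (\<forall>e1 e2 e3 e4. orthonormal4 e1 e2 e3 e4 \<longrightarrow> isotropic_expr R e1 e2 e3 e4 \<ge> 0)"

definition pos_IC :: "tensor4 \<Rightarrow> bool" where
  "pos_IC R \<longleftrightarrow> (\<forall>e1 e2 e3 e4. orthonormal4 e1 e2 e3 e4 \<longrightarrow> isotropic_expr R e1 e2 e3 e4 > 0)"

text \<open>S^2_0(V): traceless symmetric two-tensors, with inner product tr(hk).\<close>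

definition S20 :: "mat4 \<Rightarrow> bool" where
  "S20 h \<longleftrightarrow> (\<forall>i j. h$i$j = h$j$i) \<and> (\<Sum>i\<in>UNIV. h$i$i) = 0"

definition mat_inner :: "mat4 \<Rightarrow> mat4 \<Rightarrow> real" where
  "mat_inner h k = (\<Sum>i\<in>UNIV. \<Sum>j\<in>UNIV. h$i$j * k$i$j)"

definition Rbar :: "tensor4 \<Rightarrow> mat4 \<Rightarrow> mat4" where
  "Rbar R h = (\<chi> i j. \<Sum>k\<in>UNIV. \<Sum>l\<in>UNIV. R i k l j * h$k$l)"

definition proj_traceless :: "mat4 \<Rightarrow> mat4" where
  "proj_traceless h = (\<chi> i j. h$i$j - (if i = j then (\<Sum>m\<in>UNIV. h$m$m) / 4 else 0))"

definition Rring :: "tensor4 \<Rightarrow> mat4 \<Rightarrow> mat4" where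
  "Rring R h = proj_traceless (Rbar R h)"

text \<open>Symmetric operators on S^2_0(V) (N = 9) and their eigenvalues
lambda_1 \<le> ... \<le> lambda_9 (indexed 1..9), counted with multiplicity via an
orthonormal eigenbasis.\<close>

definition sym_op_S20 :: "(mat4 \<Rightarrow> mat4) \<Rightarrow> bool" where
  "sym_op_S20 A \<longleftrightarrow> (\<forall>h k. S20 h \<longrightarrow> S20 k \<longrightarrow> S20 (A h) \<and>
       (\<forall>a b. A (a *\<^sub>R h + b *\<^sub>R k) = a *\<^sub>R A h + b *\<^sub>R A k) \<and>
       mat_inner (A h) k = mat_inner h (A k))"

definition sorted_eigenvalues :: "(mat4 \<Rightarrow> mat4) \<Rightarrow> (nat \<Rightarrow> real) \<Rightarrow> bool" where
  "sorted_eigenvalues A lam \<longleftrightarrow>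
     (\<forall>a b. 1 \<le> a \<longrightarrow> a \<le> b \<longrightarrow> b \<le> 9 \<longrightarrow> lam a \<le> lam b) \<and>
     (\<exists>H :: nat \<Rightarrow> mat4.
        (\<forall>a\<in>{1..9}. S20 (H a) \<and> A (H a) = lam a *\<^sub>R H a) \<and>
        (\<forall>a\<in>{1..9}. \<forall>b\<in>{1..9}. mat_inner (H a) (H b) = (if a = b then 1 else 0)))"

definition partial_eig_sum :: "(nat \<Rightarrow> real) \<Rightarrow> real \<Rightarrow> real" where
  "partial_eig_sum lam \<alpha> = (\<Sum>i = 1..nat \<lfloor>\<alpha>\<rfloor>. lam i) + (\<alpha> - of_int \<lfloor>\<alpha>\<rfloor>) * lam (nat \<lfloor>\<alpha>\<rfloor> + 1)"

definition avg_eig :: "(nat \<Rightarrow> real) \<Rightarrow> real" where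
  "avg_eig lam = (\<Sum>i = 1..9. lam i) / 9"

definition in_cone :: "(mat4 \<Rightarrow> mat4) \<Rightarrow> real \<Rightarrow> real \<Rightarrow> bool" where
  "in_cone A \<alpha> \<theta> \<longleftrightarrow> sym_op_S20 A \<and>
     (\<forall>lam. sorted_eigenvalues A lam \<longrightarrow> partial_eig_sum lam \<alpha> / \<alpha> \<ge> - \<theta> * avg_eig lam)"

text \<open>Interior of the cone (for theta > -1 this is the strict inequality).\<close>
definition in_cone_interior :: "(mat4 \<Rightarrow> mat4) \<Rightarrow> real \<Rightarrow> real \<Rightarrow> bool" where
  "in_cone_interior A \<alpha> \<theta> \<longleftrightarrow> sym_op_S20 A \<and>
     (\<forall>lam. sorted_eigenvalues A lam \<longrightarrow> partial_eig_sum lam \<alpha> / \<alpha> > - \<theta> * avg_eig lam)"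

end

theory Submission
  imports Defs
begin

(* Fix an orthonormal frame e1, ..., e4. In this frame nine explicit matrices form an orthonormal
   basis of S^2_0(V); the first three are the real and imaginary parts of (e1 + i e2) (e3 - i e4)
   (symmetrised) and diag(1, 1, -1, -1) / 2. The symmetries of R turn the isotropic curvature of
   the frame into 2/9 tr Rring + 2/3 times the sum of the Rring-energies of these three matrices.
   The trace is 9 times the mean eigenvalue, and by Ky Fan's inequality the three energies sum to
   at least lambda_1 + lambda_2 + lambda_3, so the isotropic curvature is at least
   2 (mean + (lambda_1 + lambda_2 + lambda_3) / 3). Finally alpha |-> lambda_1 + ... + lambda_alpha
   is convex on [0, 9] (it is a minimum of linear functions of the weights), so interpolating it
   between alpha = 0, 3, 9 shows that either cone condition makes this lower bound nonnegative,
   and positive for the interior of the cone. *)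

section \<open>Orthonormal bases, traces and partial sums of eigenvalues\<close>

definition orthonormal_on :: "'i set \<Rightarrow> ('i \<Rightarrow> 'a::real_inner) \<Rightarrow> bool" where
  "orthonormal_on I G \<longleftrightarrow> (\<forall>i\<in>I. \<forall>j\<in>I. G i \<bullet> G j = (if i = j then 1 else 0))"

lemma orthonormal_onD:
  "orthonormal_on I G \<Longrightarrow> i \<in> I \<Longrightarrow> j \<in> I \<Longrightarrow> G i \<bullet> G j = (if i = j then 1 else 0)"
  unfolding orthonormal_on_def by blast

definition orthonormal_basis :: "'a::euclidean_space set \<Rightarrow> 'i set \<Rightarrow> ('i \<Rightarrow> 'a) \<Rightarrow> bool" where
  "orthonormal_basis V I G \<longleftrightarrow>
     subspace V \<and> finite I \<and> G ` I \<subseteq> V \<and> orthonormal_on I G \<and> dim V \<le> card I"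

lemma orthonormal_on_independent:
  fixes G :: "'i \<Rightarrow> 'a::euclidean_space"
  assumes "orthonormal_on I G"
  shows "inj_on G I" "independent (G ` I)"
proof -
  show "inj_on G I"
    using assms by (auto intro!: inj_onI simp: orthonormal_on_def) (metis one_neq_zero)
  have "pairwise orthogonal (G ` I)" "0 \<notin> G ` I"
    using assms by (auto simp: orthonormal_on_def pairwise_def orthogonal_def) fastforce
  then show "independent (G ` I)" by (rule pairwise_orthogonal_independent)
qed

lemma orthonormal_on_card_le_dim:
  fixes G :: "'i \<Rightarrow> 'a::euclidean_space"
  assumes "orthonormal_on I G" "G ` I \<subseteq> V"
  shows "card I \<le> dim V"
  using independent_card_le_dim[OF assms(2) orthonormal_on_independent(2)[OF assms(1)]]
    card_image[OF orthonormal_on_independent(1)[OF assms(1)]] by simp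

lemma orthonormal_basis_expansion:
  assumes G: "orthonormal_basis V I G" and x: "x \<in> V"
  shows "x = (\<Sum>i\<in>I. (x \<bullet> G i) *\<^sub>R G i)"
proof -
  have on: "orthonormal_on I G" and fin: "finite I"
    using G by (auto simp: orthonormal_basis_def)
  have "V \<subseteq> span (G ` I)"
    using G orthonormal_on_independent[OF on]
    by (intro card_ge_dim_independent) (auto simp: orthonormal_basis_def card_image)
  then have "x \<in> span (G ` I)" using x by auto
  define y where "y = x - (\<Sum>i\<in>I. (x \<bullet> G i) *\<^sub>R G i)"
  have y: "y \<in> span (G ` I)"
    unfolding y_def by (intro span_diff \<open>x \<in> span _\<close> span_sum span_scale span_base) auto
  have "orthogonal y b" if b: "b \<in> G ` I" for b
  proof -
    obtain j where j: "j \<in> I" "b = G j" using b by auto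
    have "(\<Sum>i\<in>I. (x \<bullet> G i) *\<^sub>R G i) \<bullet> G j = (\<Sum>i\<in>I. if i = j then x \<bullet> G j else 0)"
      using on j by (auto simp: inner_sum_left orthonormal_on_def intro!: sum.cong)
    then show ?thesis using j fin by (simp add: orthogonal_def y_def inner_diff_left)
  qed
  then have "orthogonal y y" by (rule orthogonal_to_span[OF y])
  then show ?thesis by (simp add: y_def orthogonal_self)
qed

lemma orthonormal_basis_parseval:
  assumes "orthonormal_basis V I G" "x \<in> V"
  shows "x \<bullet> z = (\<Sum>i\<in>I. (x \<bullet> G i) * (z \<bullet> G i))"
proof -
  from orthonormal_basis_expansion[OF assms]
  have "x \<bullet> z = (\<Sum>i\<in>I. (x \<bullet> G i) *\<^sub>R G i) \<bullet> z" by (rule arg_cong)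
  also have "\<dots> = (\<Sum>i\<in>I. (x \<bullet> G i) * (G i \<bullet> z))" by (simp add: inner_sum_left)
  finally show ?thesis by (simp add: inner_commute)
qed

lemma orthonormal_basis_quadratic_form:
  assumes H: "orthonormal_basis V I H" and lin: "linear A"
    and eig: "\<And>i. i \<in> I \<Longrightarrow> A (H i) = lam i *\<^sub>R H i" and x: "x \<in> V"
  shows "A x \<bullet> x = (\<Sum>i\<in>I. lam i * (x \<bullet> H i)\<^sup>2)"
proof -
  have "A x = (\<Sum>i\<in>I. (x \<bullet> H i * lam i) *\<^sub>R H i)"
    by (subst orthonormal_basis_expansion[OF H x])
       (simp add: linear_sum[OF lin] linear_scale[OF lin] eig cong: sum.cong)
  then show ?thesis
    by (simp add: inner_sum_left inner_sum_right power2_eq_square inner_commute mult_ac)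
qed

lemma trace_orthonormal_basis:
  assumes H: "orthonormal_basis V I H" and G: "orthonormal_basis V J G" and lin: "linear A"
    and eig: "\<And>i. i \<in> I \<Longrightarrow> A (H i) = lam i *\<^sub>R H i"
  shows "(\<Sum>j\<in>J. A (G j) \<bullet> G j) = (\<Sum>i\<in>I. lam i)"
proof -
  have "(\<Sum>j\<in>J. A (G j) \<bullet> G j) = (\<Sum>j\<in>J. \<Sum>i\<in>I. lam i * (G j \<bullet> H i)\<^sup>2)"
    using G by (intro sum.cong refl orthonormal_basis_quadratic_form[OF H lin eig])
      (auto simp: orthonormal_basis_def)
  also have "\<dots> = (\<Sum>i\<in>I. lam i * (\<Sum>j\<in>J. (H i \<bullet> G j) * (H i \<bullet> G j)))"
    by (subst sum.swap) (simp add: sum_distrib_left power2_eq_square inner_commute)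
  also have "\<dots> = (\<Sum>i\<in>I. lam i * (H i \<bullet> H i))"
    using H by (intro sum.cong refl) (auto simp: orthonormal_basis_parseval[OF G] orthonormal_basis_def)
  also have "\<dots> = (\<Sum>i\<in>I. lam i)"
    using H by (intro sum.cong refl) (auto simp: orthonormal_basis_def orthonormal_on_def)
  finally show ?thesis .
qed

definition eig_weight :: "real \<Rightarrow> nat \<Rightarrow> real" where
  "eig_weight \<alpha> i = max 0 (min 1 (\<alpha> - real i + 1))"

lemma partial_eig_sum_of_nat: "partial_eig_sum lam (real k) = (\<Sum>i = 1..k. lam i)"
  by (simp add: partial_eig_sum_def)

lemma partial_eig_sum_eq_weighted:
  assumes "0 \<le> \<alpha>" "\<alpha> \<le> real n"
  shows "partial_eig_sum lam \<alpha> = (\<Sum>i = 1..n. lam i * eig_weight \<alpha> i)"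
proof -
  define k where "k = nat \<lfloor>\<alpha>\<rfloor>"
  have k: "real k \<le> \<alpha>" "\<alpha> < real k + 1" "k \<le> n"
    using assms unfolding k_def by linarith+
  have low: "eig_weight \<alpha> i = 1" if "i \<le> k" for i
    using that k unfolding eig_weight_def by auto
  have high: "eig_weight \<alpha> i = 0" if "k + 1 < i" for i
    using that k unfolding eig_weight_def by auto
  have "(\<Sum>i = 1..n. lam i * eig_weight \<alpha> i)
      = (\<Sum>i = 1..k. lam i) + (\<Sum>i = k + 1..n. lam i * eig_weight \<alpha> i)"
  proof -
    have "{1..n} = {1..k} \<union> {k + 1..n}" using k(3) by auto
    then show ?thesis using low by (simp add: sum.union_disjoint)
  qed
  also have "(\<Sum>i = k + 1..n. lam i * eig_weight \<alpha> i) = (\<alpha> - real k) * lam (k + 1)"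
  proof (cases "k < n")
    case True
    have "(\<Sum>i = k + 1..n. lam i * eig_weight \<alpha> i) = lam (k + 1) * eig_weight \<alpha> (k + 1)"
      using True high by (subst sum.atLeast_Suc_atMost) (auto intro!: sum.neutral)
    then show ?thesis using k unfolding eig_weight_def by simp
  next
    case False
    then show ?thesis using k assms by simp
  qed
  finally show ?thesis
    using assms(1) unfolding partial_eig_sum_def k_def by simp
qed

lemma sum_eig_weight:
  assumes "0 \<le> \<alpha>" "\<alpha> \<le> real n"
  shows "(\<Sum>i = 1..n. eig_weight \<alpha> i) = \<alpha>"
  using partial_eig_sum_eq_weighted[OF assms, of "\<lambda>_. 1"] assms
  by (simp add: partial_eig_sum_def)

lemma eig_weight_bounds: "0 \<le> eig_weight \<alpha> i" "eig_weight \<alpha> i \<le> 1"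
  unfolding eig_weight_def by auto

text \<open>The comparison with the weights eig_weight is termwise once the threshold eigenvalue c
  is subtracted.\<close>
lemma partial_eig_sum_le_weighted:
  assumes mono: "mono_on {1..n} lam"
    and m: "\<And>i. i \<in> {1..n} \<Longrightarrow> 0 \<le> m i \<and> m i \<le> 1"
    and mass: "(\<Sum>i = 1..n. m i) = \<alpha>"
  shows "partial_eig_sum lam \<alpha> \<le> (\<Sum>i = 1..n. lam i * m i)"
proof -
  have \<alpha>: "0 \<le> \<alpha>" "\<alpha> \<le> real n"
    using mass sum_mono[of "{1..n}" "\<lambda>_. 0" m] sum_mono[of "{1..n}" m "\<lambda>_. 1"] m by auto
  define w where "w = eig_weight \<alpha>"
  define c where "c = lam (min (nat \<lfloor>\<alpha>\<rfloor> + 1) n)"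
  have termwise: "0 \<le> (lam i - c) * (m i - w i)" if i: "i \<in> {1..n}" for i
  proof -
    consider "real i \<le> \<alpha>" | "\<alpha> + 1 \<le> real i" | "i = nat \<lfloor>\<alpha>\<rfloor> + 1"
      using \<alpha> by linarith
    then show ?thesis
    proof cases
      case 1
      then have "i \<le> nat \<lfloor>\<alpha>\<rfloor>" by (simp add: le_nat_floor)
      then have "lam i \<le> c" unfolding c_def using i by (intro mono_onD[OF mono]) auto
      moreover have "w i = 1" using 1 by (simp add: w_def eig_weight_def)
      ultimately show ?thesis using m[OF i] by (simp add: mult_nonpos_nonpos)
    next
      case 2
      then have "real (nat \<lfloor>\<alpha>\<rfloor> + 1) \<le> real i" using \<alpha>(1) by linarith
      then have "nat \<lfloor>\<alpha>\<rfloor> + 1 \<le> i" by (simp only: of_nat_le_iff)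
      then have "c \<le> lam i" unfolding c_def using i by (intro mono_onD[OF mono]) auto
      moreover have "w i = 0" using 2 by (simp add: w_def eig_weight_def)
      ultimately show ?thesis using m[OF i] by simp
    qed (use i in \<open>simp add: c_def\<close>)
  qed
  have "(\<Sum>i = 1..n. lam i * m i) - (\<Sum>i = 1..n. lam i * w i)
      = (\<Sum>i = 1..n. (lam i - c) * (m i - w i)) + c * ((\<Sum>i = 1..n. m i) - (\<Sum>i = 1..n. w i))"
    by (simp add: left_diff_distrib right_diff_distrib sum_subtractf sum_distrib_left)
  also have "\<dots> = (\<Sum>i = 1..n. (lam i - c) * (m i - w i))"
    using mass sum_eig_weight[OF \<alpha>] by (simp add: w_def)
  also have "\<dots> \<ge> 0" using termwise by (intro sum_nonneg) auto
  finally show ?thesis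
    using partial_eig_sum_eq_weighted[OF \<alpha>] by (simp add: w_def)
qed

lemma convex_on_partial_eig_sum:
  assumes mono: "mono_on {1..n} lam"
  shows "convex_on {0..real n} (partial_eig_sum lam)"
proof (rule convex_onI)
  fix t x y :: real
  assume t: "0 < t" "t < 1" and x: "x \<in> {0..real n}" and y: "y \<in> {0..real n}"
  define m where "m i = (1 - t) * eig_weight x i + t * eig_weight y i" for i
  have "partial_eig_sum lam ((1 - t) *\<^sub>R x + t *\<^sub>R y) \<le> (\<Sum>i = 1..n. lam i * m i)"
  proof (rule partial_eig_sum_le_weighted[OF mono])
    show "0 \<le> m i \<and> m i \<le> 1" for i
      using t eig_weight_bounds[of x i] eig_weight_bounds[of y i] unfolding m_def
      by (auto intro!: convex_bound_le add_nonneg_nonneg)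
    show "(\<Sum>i = 1..n. m i) = (1 - t) *\<^sub>R x + t *\<^sub>R y"
      using x y sum_eig_weight[of x n] sum_eig_weight[of y n]
      by (simp add: m_def sum.distrib flip: sum_distrib_left)
  qed
  also have "\<dots> = (1 - t) * partial_eig_sum lam x + t * partial_eig_sum lam y"
    using x y partial_eig_sum_eq_weighted[of x n lam] partial_eig_sum_eq_weighted[of y n lam]
    by (simp add: m_def distrib_left sum.distrib sum_distrib_left mult.left_commute)
  finally show "partial_eig_sum lam ((1 - t) *\<^sub>R x + t *\<^sub>R y)
      \<le> (1 - t) * partial_eig_sum lam x + t * partial_eig_sum lam y" .
qed simp

text \<open>Interpolate the convex function alpha |-> lambda_1 + ... + lambda_alpha between 0 and 3,
  respectively between 3 and 9.\<close>
lemma partial_eig_sum_cone_bound: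
  assumes mono: "mono_on {1..9} lam"
    and regime: "(1 \<le> \<alpha> \<and> \<alpha> \<le> 3 \<and> \<theta> = 1) \<or> (3 \<le> \<alpha> \<and> \<alpha> < 9 \<and> \<theta> = 9 / \<alpha> - 2)"
  obtains c where "0 < c"
    "partial_eig_sum lam \<alpha> / \<alpha> + \<theta> * avg_eig lam \<le> c * (avg_eig lam + (lam 1 + lam 2 + lam 3) / 3)"
proof -
  define P where "P = partial_eig_sum lam"
  have conv: "convex_on {0..9} P"
    using convex_on_partial_eig_sum[OF mono] by (simp add: P_def)
  have P0: "P 0 = 0" and P3: "P 3 = lam 1 + lam 2 + lam 3" and P9: "P 9 = 9 * avg_eig lam"
    using partial_eig_sum_of_nat[of lam 0] partial_eig_sum_of_nat[of lam 3] partial_eig_sum_of_nat[of lam 9]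
    by (simp_all add: P_def avg_eig_def numeral_eq_Suc)
  consider "1 \<le> \<alpha>" "\<alpha> \<le> 3" "\<theta> = 1" | "3 \<le> \<alpha>" "\<alpha> < 9" "\<theta> = 9 / \<alpha> - 2"
    using regime by blast
  then show ?thesis
  proof cases
    case 1
    have "P \<alpha> \<le> (P 3 - P 0) / (3 - 0) * (\<alpha> - 0) + P 0"
      using 1 by (intro convex_onD_Icc' convex_on_subset[OF conv]) auto
    then have "P \<alpha> / \<alpha> + \<theta> * avg_eig lam \<le> 1 * (avg_eig lam + (lam 1 + lam 2 + lam 3) / 3)"
      using 1 by (simp add: P0 P3 divide_le_eq algebra_simps)
    then show ?thesis by (intro that[of 1]) (simp_all add: P_def)
  next
    case 2
    have "P \<alpha> \<le> (P 9 - P 3) / (9 - 3) * (\<alpha> - 3) + P 3"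
      using 2 by (intro convex_onD_Icc' convex_on_subset[OF conv]) auto
    define S where "S = avg_eig lam + (lam 1 + lam 2 + lam 3) / 3"
    have "P \<alpha> + (9 - 2 * \<alpha>) * avg_eig lam
        \<le> (9 * avg_eig lam - (lam 1 + lam 2 + lam 3)) / 6 * (\<alpha> - 3) + (lam 1 + lam 2 + lam 3)
          + (9 - 2 * \<alpha>) * avg_eig lam"
      using \<open>P \<alpha> \<le> _\<close> by (simp add: P3 P9)
    also have "\<dots> = (9 - \<alpha>) / 2 * S" by (simp add: S_def field_simps)
    finally have "(P \<alpha> + (9 - 2 * \<alpha>) * avg_eig lam) / \<alpha> \<le> (9 - \<alpha>) / 2 * S / \<alpha>"
      using 2 by (intro divide_right_mono) auto
    moreover have "(P \<alpha> + (9 - 2 * \<alpha>) * avg_eig lam) / \<alpha> = P \<alpha> / \<alpha> + \<theta> * avg_eig lam"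
    proof -
      have "9 - 2 * \<alpha> = \<theta> * \<alpha>" using 2 by (simp add: field_simps)
      then show ?thesis using 2 by (simp add: add_divide_distrib)
    qed
    ultimately have "P \<alpha> / \<alpha> + \<theta> * avg_eig lam \<le> (9 - \<alpha>) / (2 * \<alpha>) * S"
      by (simp add: field_simps)
    then show ?thesis using 2 by (intro that[of "(9 - \<alpha>) / (2 * \<alpha>)"]) (simp_all add: P_def S_def)
  qed
qed

lemma ky_fan_partial_trace:
  fixes k n :: nat
  assumes H: "orthonormal_basis V {1..n} H" and G: "orthonormal_basis V {1..n} G"
    and lin: "linear A" and eig: "\<And>i. i \<in> {1..n} \<Longrightarrow> A (H i) = lam i *\<^sub>R H i"
    and mono: "mono_on {1..n} lam" and k: "k \<le> n"
  shows "(\<Sum>i = 1..k. lam i) \<le> (\<Sum>j = 1..k. A (G j) \<bullet> G j)"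
proof -
  have HV: "H i \<in> V" "H i \<bullet> H i = 1" if "i \<in> {1..n}" for i
    using H that by (auto simp: orthonormal_basis_def orthonormal_on_def)
  have GV: "G j \<in> V" "G j \<bullet> G j = 1" if "j \<in> {1..n}" for j
    using G that by (auto simp: orthonormal_basis_def orthonormal_on_def)
  define m where "m i = (\<Sum>j = 1..k. (G j \<bullet> H i)\<^sup>2)" for i
  have "(\<Sum>j = 1..k. A (G j) \<bullet> G j) = (\<Sum>j = 1..k. \<Sum>i = 1..n. lam i * (G j \<bullet> H i)\<^sup>2)"
    using k by (intro sum.cong refl orthonormal_basis_quadratic_form[OF H lin eig] GV(1)) simp_all
  also have "\<dots> = (\<Sum>i = 1..n. lam i * m i)"
    by (subst sum.swap) (simp add: m_def sum_distrib_left)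
  finally have trace: "(\<Sum>j = 1..k. A (G j) \<bullet> G j) = (\<Sum>i = 1..n. lam i * m i)" .
  have "0 \<le> m i \<and> m i \<le> 1" if i: "i \<in> {1..n}" for i
  proof -
    have "m i \<le> (\<Sum>j = 1..n. (H i \<bullet> G j) * (H i \<bullet> G j))"
      using k by (auto simp: m_def power2_eq_square inner_commute intro!: sum_mono2)
    also have "\<dots> = 1"
      using HV[OF i] orthonormal_basis_parseval[OF G, of "H i" "H i"] by simp
    finally show ?thesis by (auto simp: m_def intro: sum_nonneg)
  qed
  moreover have "(\<Sum>i = 1..n. m i) = real k"
  proof -
    have "(\<Sum>i = 1..n. m i) = (\<Sum>j = 1..k. \<Sum>i = 1..n. (G j \<bullet> H i) * (G j \<bullet> H i))"
      unfolding m_def by (subst sum.swap) (simp add: power2_eq_square)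
    also have "\<dots> = (\<Sum>j = 1..k. G j \<bullet> G j)"
      using k GV orthonormal_basis_parseval[OF H] by (intro sum.cong refl) simp
    also have "\<dots> = real k" using k GV by simp
    finally show ?thesis .
  qed
  ultimately have "partial_eig_sum lam (real k) \<le> (\<Sum>i = 1..n. lam i * m i)"
    by (intro partial_eig_sum_le_weighted[OF mono]) auto
  then show ?thesis by (simp only: trace partial_eig_sum_of_nat)
qed

section \<open>The spectral theorem\<close>

lemma linear_coeff_zero_if_quadratic_nonneg:
  fixes c d :: real
  assumes "\<And>t. 0 \<le> 2 * t * c + t\<^sup>2 * d"
  shows "c = 0"
proof -
  have "c * c \<le> 0"
  proof (cases "d \<le> 0")
    case True
    have "0 \<le> 2 * (- c) * c + (- c)\<^sup>2 * d" by (rule assms)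
    moreover have "(- c)\<^sup>2 * d \<le> 0" using True by (simp add: mult_nonneg_nonpos)
    ultimately show ?thesis by (simp add: power2_eq_square)
  next
    case False
    have "0 \<le> 2 * (- c / d) * c + (- c / d)\<^sup>2 * d" by (rule assms)
    also have "\<dots> = - (c * c) / d" using False by (simp add: power2_eq_square field_simps)
    finally show ?thesis using False by (simp add: divide_le_0_iff)
  qed
  then show ?thesis by (auto simp: mult_le_0_iff)
qed

lemma rayleigh_minimizer_exists:
  fixes A :: "'a::euclidean_space \<Rightarrow> 'a"
  assumes W: "subspace W" and lin: "linear A" and x: "x \<in> W" "x \<noteq> 0"
  obtains u where "u \<in> W" "u \<bullet> u = 1" "\<And>w. w \<in> W \<Longrightarrow> (A u \<bullet> u) * (w \<bullet> w) \<le> A w \<bullet> w"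
proof -
  have unit: "w /\<^sub>R norm w \<in> W \<inter> sphere 0 1" if "w \<in> W" "w \<noteq> 0" for w
    using that subspace_scale[OF W] by auto
  have "continuous_on (W \<inter> sphere 0 1) (\<lambda>w. A w \<bullet> w)"
    using lin by (intro continuous_intros linear_continuous_on linear_conv_bounded_linear[THEN iffD1])
  moreover have "compact (W \<inter> sphere 0 1)"
    by (intro closed_Int_compact compact_sphere closed_subspace W)
  ultimately obtain u where u: "u \<in> W \<inter> sphere 0 1"
    and min: "\<And>w. w \<in> W \<inter> sphere 0 1 \<Longrightarrow> A u \<bullet> u \<le> A w \<bullet> w"
    using continuous_attains_inf[of "W \<inter> sphere 0 1"] unit[OF x] by blast
  have "(A u \<bullet> u) * (w \<bullet> w) \<le> A w \<bullet> w" if w: "w \<in> W" for w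
  proof (cases "w = 0")
    case False
    have "A u \<bullet> u \<le> A (w /\<^sub>R norm w) \<bullet> (w /\<^sub>R norm w)" by (rule min[OF unit[OF w False]])
    also have "\<dots> = (A w \<bullet> w) / (w \<bullet> w)"
      using False by (simp add: linear_scale[OF lin] dot_square_norm power2_eq_square field_simps)
    finally show ?thesis using False by (simp add: le_divide_eq)
  qed (simp add: linear_0[OF lin])
  with u show ?thesis by (intro that) (auto simp: dot_square_norm)
qed

text \<open>First variation: the quadratic form of A - mu, which is nonnegative on W and vanishes at
  the minimiser u, has u in its kernel.\<close>
lemma rayleigh_minimizer_eigenvector:
  fixes A :: "'a::euclidean_space \<Rightarrow> 'a"
  assumes W: "subspace W" and lin: "linear A" and inv: "\<And>x. x \<in> W \<Longrightarrow> A x \<in> W"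
    and sym: "\<And>x y. x \<in> W \<Longrightarrow> y \<in> W \<Longrightarrow> A x \<bullet> y = x \<bullet> A y"
    and u: "u \<in> W" "u \<bullet> u = 1" and min: "\<And>w. w \<in> W \<Longrightarrow> (A u \<bullet> u) * (w \<bullet> w) \<le> A w \<bullet> w"
  shows "A u = (A u \<bullet> u) *\<^sub>R u"
proof -
  define \<mu> where "\<mu> = A u \<bullet> u"
  have orth: "(A u - \<mu> *\<^sub>R u) \<bullet> v = 0" if v: "v \<in> W" for v
  proof -
    have "0 \<le> 2 * t * (A u \<bullet> v - \<mu> * (u \<bullet> v)) + t\<^sup>2 * (A v \<bullet> v - \<mu> * (v \<bullet> v))" for t
    proof -
      have "\<mu> * ((u + t *\<^sub>R v) \<bullet> (u + t *\<^sub>R v)) \<le> A (u + t *\<^sub>R v) \<bullet> (u + t *\<^sub>R v)"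
        unfolding \<mu>_def using u v W by (intro min subspace_add subspace_scale) auto
      moreover have "A v \<bullet> u = A u \<bullet> v" using sym[OF v u(1)] by (simp add: inner_commute)
      ultimately show ?thesis
        using u(2) by (simp add: linear_add[OF lin] linear_scale[OF lin] inner_add_left
            inner_add_right inner_commute power2_eq_square \<mu>_def algebra_simps)
    qed
    then have "A u \<bullet> v - \<mu> * (u \<bullet> v) = 0" by (rule linear_coeff_zero_if_quadratic_nonneg)
    then show ?thesis by (simp add: inner_diff_left)
  qed
  have "A u - \<mu> *\<^sub>R u \<in> W" using u inv W by (intro subspace_diff subspace_scale) auto
  from orth[OF this] show ?thesis by (simp add: \<mu>_def)
qed

text \<open>The minimality clause (Courant--Fischer) is what makes the eigenvalues come out sorted.\<close>
lemma self_adjoint_orthonormal_eigenvectors: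
  fixes A :: "'a::euclidean_space \<Rightarrow> 'a"
  assumes V: "subspace V" and lin: "linear A" and inv: "\<And>x. x \<in> V \<Longrightarrow> A x \<in> V"
    and sym: "\<And>x y. x \<in> V \<Longrightarrow> y \<in> V \<Longrightarrow> A x \<bullet> y = x \<bullet> A y"
  shows "k \<le> dim V \<Longrightarrow> \<exists>H lam. (\<forall>i<k. H i \<in> V \<and> A (H i) = lam i *\<^sub>R H i) \<and>
      orthonormal_on {..<k} H \<and>
      (\<forall>i<k. \<forall>x\<in>V. (\<forall>j<i. x \<bullet> H j = 0) \<longrightarrow> lam i * (x \<bullet> x) \<le> A x \<bullet> x)"
proof (induction k)
  case (Suc k)
  then obtain H lam where HV: "\<forall>i<k. H i \<in> V \<and> A (H i) = lam i *\<^sub>R H i"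
    and Hon: "orthonormal_on {..<k} H"
    and Hmin: "\<forall>i<k. \<forall>x\<in>V. (\<forall>j<i. x \<bullet> H j = 0) \<longrightarrow> lam i * (x \<bullet> x) \<le> A x \<bullet> x"
    by auto
  define W where "W = {x \<in> V. \<forall>j<k. x \<bullet> H j = 0}"
  have W: "subspace W"
    using V unfolding W_def subspace_def by (auto simp: inner_add_left)
  have invW: "A x \<in> W" if "x \<in> W" for x
    using that HV inv sym[of x "H _"] unfolding W_def by auto
  have proper: "span (H ` {..<k}) \<subset> span V"
  proof
    show "span (H ` {..<k}) \<subseteq> span V" using HV by (intro span_mono) auto
    have "dim (span (H ` {..<k})) \<le> k"
      using dim_le_card[of "H ` {..<k}" "H ` {..<k}"] card_image_le[of "{..<k}" H]
      by (simp add: span_base subsetI)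
    then show "span (H ` {..<k}) \<noteq> span V" using Suc.prems by (metis dim_span not_less_eq_eq)
  qed
  obtain x where "x \<noteq> 0" "x \<in> span V" "\<And>y. y \<in> span (H ` {..<k}) \<Longrightarrow> orthogonal x y"
    using orthogonal_to_subspace_exists_gen[OF proper] by metis
  then have "x \<noteq> 0" "x \<in> W"
    using V unfolding W_def by (auto simp: span_eq_iff[THEN iffD2, OF V] orthogonal_def span_base)
  then obtain u where u: "u \<in> W" "u \<bullet> u = 1"
    and umin: "\<And>w. w \<in> W \<Longrightarrow> (A u \<bullet> u) * (w \<bullet> w) \<le> A w \<bullet> w"
    using rayleigh_minimizer_exists[OF W lin] by blast
  have Au: "A u = (A u \<bullet> u) *\<^sub>R u"
    using W_def sym by (intro rayleigh_minimizer_eigenvector[OF W lin invW _ u umin]) auto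
  show ?case
  proof (intro exI[of _ "H(k := u)"] exI[of _ "lam(k := A u \<bullet> u)"] conjI allI impI ballI)
    fix i assume "i < Suc k"
    then show "(H(k := u)) i \<in> V" "A ((H(k := u)) i) = (lam(k := A u \<bullet> u)) i *\<^sub>R (H(k := u)) i"
      using HV u Au by (auto simp: W_def less_Suc_eq)
  next
    show "orthonormal_on {..<Suc k} (H(k := u))"
      using Hon u unfolding orthonormal_on_def W_def by (auto simp: less_Suc_eq inner_commute)
  next
    fix i x assume i: "i < Suc k" and x: "x \<in> V" "\<forall>j<i. x \<bullet> (H(k := u)) j = 0"
    show "(lam(k := A u \<bullet> u)) i * (x \<bullet> x) \<le> A x \<bullet> x"
    proof (cases "i = k")
      case True
      then have "x \<in> W" using x unfolding W_def by auto
      then show ?thesis using umin True by simp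
    next
      case False
      then show ?thesis using i x Hmin by (auto simp: less_Suc_eq)
    qed
  qed
qed (simp add: orthonormal_on_def)

section \<open>Algebraic curvature tensors in an orthonormal frame\<close>

lemma curv_eval_tensor_add:
  "curv_eval (\<lambda>i j k l. R i j k l + S i j k l) x y z w = curv_eval R x y z w + curv_eval S x y z w"
  unfolding curv_eval_def by (simp add: distrib_right sum.distrib)

lemma curv_eval_tensor_uminus: "curv_eval (\<lambda>i j k l. - R i j k l) x y z w = - curv_eval R x y z w"
  unfolding curv_eval_def by (simp add: sum_negf)

lemma curv_eval_tensor_zero: "curv_eval (\<lambda>i j k l. 0) x y z w = 0"
  unfolding curv_eval_def by simp

lemma curv_eval_as_sum_over_tuples:
  "curv_eval R x y z w = (\<Sum>(i, j, k, l)\<in>UNIV. R i j k l * x$i * y$j * z$k * w$l)"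
  unfolding curv_eval_def by (simp add: sum.cartesian_product flip: UNIV_Times_UNIV)

lemma curv_eval_swap12: "curv_eval R y x z w = curv_eval (\<lambda>i j k l. R j i k l) x y z w"
  unfolding curv_eval_def by (subst sum.swap) (simp add: ac_simps)

lemma curv_eval_swap34: "curv_eval R x y w z = curv_eval (\<lambda>i j k l. R i j l k) x y z w"
  unfolding curv_eval_def by (subst (3) sum.swap) (simp add: ac_simps)

lemma curv_eval_swap_pairs: "curv_eval R z w x y = curv_eval (\<lambda>i j k l. R k l i j) x y z w"
  unfolding curv_eval_as_sum_over_tuples
  by (rule sum.reindex_bij_witness[of _ "\<lambda>(i, j, k, l). (k, l, i, j)" "\<lambda>(i, j, k, l). (k, l, i, j)"])
    (auto simp: ac_simps)

lemma curv_eval_rotate: "curv_eval R y z x w = curv_eval (\<lambda>i j k l. R j k i l) x y z w"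
  unfolding curv_eval_as_sum_over_tuples
  by (rule sum.reindex_bij_witness[of _ "\<lambda>(i, j, k, l). (j, k, i, l)" "\<lambda>(i, j, k, l). (k, i, j, l)"])
    (auto simp: ac_simps)

definition frame_tensor :: "tensor4 \<Rightarrow> (4 \<Rightarrow> real^4) \<Rightarrow> tensor4" where
  "frame_tensor R f a b c d = curv_eval R (f a) (f b) (f c) (f d)"

lemma alg_curv_frame_tensor:
  assumes "alg_curv R"
  shows "alg_curv (frame_tensor R f)"
proof -
  have R: "(\<lambda>i j k l. R j i k l) = (\<lambda>i j k l. - R i j k l)"
    "(\<lambda>i j k l. R i j l k) = (\<lambda>i j k l. - R i j k l)" "(\<lambda>i j k l. R k l i j) = R"
    "(\<lambda>i j k l. R i j k l + R j k i l + R k i j l) = (\<lambda>i j k l. 0)"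
    using assms unfolding alg_curv_def by (intro ext; metis minus_minus)+
  have "curv_eval R y x z w = - curv_eval R x y z w" for x y z w
    unfolding curv_eval_swap12[of R y x] R(1) by (rule curv_eval_tensor_uminus)
  moreover have "curv_eval R x y w z = - curv_eval R x y z w" for x y z w
    unfolding curv_eval_swap34[of R x y w z] R(2) by (rule curv_eval_tensor_uminus)
  moreover have "curv_eval R z w x y = curv_eval R x y z w" for x y z w
    unfolding curv_eval_swap_pairs[of R z w x y] R(3) ..
  moreover have "curv_eval R x y z w + curv_eval R y z x w + curv_eval R z x y w = 0" for x y z w
  proof -
    have rot2: "curv_eval R z x y w = curv_eval (\<lambda>i j k l. R k i j l) x y z w"
      using curv_eval_rotate[of R z x y w] curv_eval_rotate[of "\<lambda>i j k l. R j k i l" y z x w] by simp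
    have "curv_eval R x y z w + curv_eval R y z x w + curv_eval R z x y w
        = curv_eval (\<lambda>i j k l. R i j k l + R j k i l + R k i j l) x y z w"
      unfolding curv_eval_rotate[of R y z x w] rot2 curv_eval_tensor_add ..
    then show ?thesis unfolding R(4) curv_eval_tensor_zero .
  qed
  ultimately show ?thesis unfolding alg_curv_def frame_tensor_def by blast
qed

definition sym_unit :: "4 \<Rightarrow> 4 \<Rightarrow> 4 \<Rightarrow> 4 \<Rightarrow> real" where
  "sym_unit p q a b = (if a = p \<and> b = q \<or> a = q \<and> b = p then 1 else 0)"

definition diag_pm :: "4 \<Rightarrow> 4 \<Rightarrow> 4 \<Rightarrow> real" where
  "diag_pm p a b = (if a \<noteq> b then 0 else if a = 1 \<or> a = p then 1 else -1)"

text \<open>The first three matrices are the real and imaginary parts of the symmetrised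
  (e1 + i e2) (e3 - i e4) and diag(1, 1, -1, -1) / 2; they carry the isotropic curvature.\<close>
definition frame_basis :: "nat \<Rightarrow> 4 \<Rightarrow> 4 \<Rightarrow> real" where
  "frame_basis n a b =
     [sym_unit 1 3 a b + sym_unit 2 4 a b, sym_unit 1 4 a b - sym_unit 2 3 a b, diag_pm 2 a b,
      sym_unit 1 3 a b - sym_unit 2 4 a b, sym_unit 1 4 a b + sym_unit 2 3 a b,
      sym_unit 1 2 a b + sym_unit 3 4 a b, sym_unit 1 2 a b - sym_unit 3 4 a b,
      diag_pm 3 a b, diag_pm 4 a b] ! (n - 1) / 2"

lemma frame_basis_simps:
  "frame_basis 1 a b = (sym_unit 1 3 a b + sym_unit 2 4 a b) / 2"
  "frame_basis 2 a b = (sym_unit 1 4 a b - sym_unit 2 3 a b) / 2"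
  "frame_basis 3 a b = diag_pm 2 a b / 2"
  "frame_basis 4 a b = (sym_unit 1 3 a b - sym_unit 2 4 a b) / 2"
  "frame_basis 5 a b = (sym_unit 1 4 a b + sym_unit 2 3 a b) / 2"
  "frame_basis 6 a b = (sym_unit 1 2 a b + sym_unit 3 4 a b) / 2"
  "frame_basis 7 a b = (sym_unit 1 2 a b - sym_unit 3 4 a b) / 2"
  "frame_basis 8 a b = diag_pm 3 a b / 2"
  "frame_basis 9 a b = diag_pm 4 a b / 2"
  by (simp_all add: frame_basis_def)

lemma atLeastAtMost_1_9: "n \<in> {1..9::nat} \<longleftrightarrow> n \<in> {1, 2, 3, 4, 5, 6, 7, 8, 9}"
  by auto

lemma frame_basis_symmetric: "n \<in> {1..9} \<Longrightarrow> frame_basis n a b = frame_basis n b a"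
  unfolding atLeastAtMost_1_9 insert_iff empty_iff
  by (elim disjE; simp only: frame_basis_simps; simp add: sym_unit_def diag_pm_def conj_commute disj_commute)

lemma frame_basis_traceless: "n \<in> {1..9} \<Longrightarrow> (\<Sum>a\<in>UNIV. frame_basis n a a) = 0"
  unfolding atLeastAtMost_1_9 insert_iff empty_iff
  by (elim disjE; simp only: frame_basis_simps; simp add: sym_unit_def diag_pm_def sum_4)

lemma frame_basis_orthonormal:
  assumes "n \<in> {1..9}" "m \<in> {1..9}"
  shows "(\<Sum>a\<in>UNIV. \<Sum>b\<in>UNIV. frame_basis n a b * frame_basis m a b) = (if n = m then 1 else 0)"
  using assms unfolding atLeastAtMost_1_9 insert_iff empty_iff
  by (elim disjE; simp only: frame_basis_simps; simp add: sym_unit_def diag_pm_def sum_4)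

definition curv_form :: "tensor4 \<Rightarrow> (4 \<Rightarrow> 4 \<Rightarrow> real) \<Rightarrow> real" where
  "curv_form T X = (\<Sum>a\<in>UNIV. \<Sum>b\<in>UNIV. X a b * (\<Sum>c\<in>UNIV. \<Sum>d\<in>UNIV. X c d * T a c d b))"

text \<open>In the type 4 the numeral 4 equals 0, so it is the least index.\<close>
lemma less_4_simps:
  "(4::4) < 1" "(4::4) < 2" "(4::4) < 3" "(1::4) < 2" "(1::4) < 3" "(2::4) < 3"
  "\<not> (1::4) < 4" "\<not> (2::4) < 4" "\<not> (3::4) < 4" "\<not> (2::4) < 1" "\<not> (3::4) < 1" "\<not> (3::4) < 2"
  by (simp_all add: less_bit0_def bit0.Rep_numeral bit0.Rep_1)

text \<open>Oriented so that the simplifier brings every component to a normal form; the unconditional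
  pair symmetry is permutative and hence only applied by ordered rewriting.\<close>
lemma alg_curv_simps:
  assumes "alg_curv T"
  shows "T i i k l = 0" "T i j k k = 0" "j < i \<Longrightarrow> T i j k l = - T j i k l"
    "l < k \<Longrightarrow> T i j k l = - T i j l k" "T i j k l = T k l i j"
  using assms unfolding alg_curv_def by (metis neg_equal_zero)+

lemma isotropic_curv_form_identity:
  assumes "alg_curv T"
  shows "T 1 3 1 3 + T 1 4 1 4 + T 2 3 2 3 + T 2 4 2 4 - 2 * T 1 2 3 4
    = 2 / 9 * (\<Sum>n = 1..9. curv_form T (frame_basis n)) + 2 / 3 * (\<Sum>n = 1..3. curv_form T (frame_basis n))"
proof -
  have "T 1 2 3 4 + T 2 3 1 4 + T 3 1 2 4 = 0" using assms unfolding alg_curv_def by blast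
  note bianchi = this[simplified alg_curv_simps[OF assms] less_4_simps]
  have sums: "(\<Sum>n = 1..9. f n) = f 1 + f 2 + f 3 + f 4 + f 5 + f 6 + f 7 + f 8 + f 9"
    "(\<Sum>n = 1..3. f n) = f 1 + f 2 + f 3" for f :: "nat \<Rightarrow> real"
    by (simp_all add: numeral_eq_Suc)
  show ?thesis
    unfolding sums curv_form_def frame_basis_simps using bianchi
    by (simp add: sym_unit_def diag_pm_def sum_4 alg_curv_simps[OF assms] less_4_simps)
      (simp add: field_simps)
qed

section \<open>Traceless symmetric matrices\<close>

lemma mat_inner_eq_inner: "mat_inner h k = h \<bullet> k"
  unfolding mat_inner_def by (simp add: inner_vec_def)

lemma subspace_S20: "subspace {h. S20 h}"
  unfolding subspace_def S20_def by (auto simp: sum.distrib simp flip: sum_distrib_left)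

lemma linear_Rbar: "linear (Rbar R)"
  by (intro linearI) (simp_all add: Rbar_def vec_eq_iff distrib_left sum.distrib sum_distrib_left algebra_simps)

lemma linear_Rring: "linear (Rring R)"
proof -
  have "linear proj_traceless"
    by (intro linearI) (auto simp: proj_traceless_def vec_eq_iff sum.distrib algebra_simps add_divide_distrib
        simp flip: sum_distrib_left)
  then show ?thesis
    using linear_compose[OF linear_Rbar] unfolding Rring_def comp_def by blast
qed

lemma inner_proj_traceless:
  assumes "S20 k"
  shows "proj_traceless M \<bullet> k = M \<bullet> k"
proof -
  have "proj_traceless M = M - ((\<Sum>m\<in>UNIV. M$m$m) / 4) *\<^sub>R (\<chi> i j. if i = j then 1 else 0)"
    by (simp add: proj_traceless_def vec_eq_iff)
  moreover have "(\<chi> i j. if i = j then 1 else 0) \<bullet> k = (\<Sum>i\<in>UNIV. \<Sum>j\<in>UNIV. if i = j then k$i$j else 0)"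
    unfolding inner_vec_def by (intro sum.cong) auto
  ultimately show ?thesis using assms by (simp add: S20_def inner_diff_left)
qed

definition outer :: "real^4 \<Rightarrow> real^4 \<Rightarrow> mat4" where
  "outer u v = (\<chi> i j. u$i * v$j)"

definition frame_matrix :: "(4 \<Rightarrow> real^4) \<Rightarrow> (4 \<Rightarrow> 4 \<Rightarrow> real) \<Rightarrow> mat4" where
  "frame_matrix f X = (\<Sum>a\<in>UNIV. \<Sum>b\<in>UNIV. X a b *\<^sub>R outer (f a) (f b))"

lemma frame_matrix_inner:
  assumes f: "orthonormal_on UNIV f"
  shows "frame_matrix f X \<bullet> frame_matrix f Y = (\<Sum>a\<in>UNIV. \<Sum>b\<in>UNIV. X a b * Y a b)"
proof -
  have "outer u v \<bullet> outer u' v' = (u \<bullet> u') * (v \<bullet> v')" for u v u' v'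
    unfolding outer_def by (simp add: inner_vec_def sum_product algebra_simps)
  then have "frame_matrix f X \<bullet> frame_matrix f Y
      = (\<Sum>a\<in>UNIV. \<Sum>b\<in>UNIV. Y a b * (\<Sum>c\<in>UNIV. \<Sum>d\<in>UNIV. X c d * ((f c \<bullet> f a) * (f d \<bullet> f b))))"
    by (simp add: frame_matrix_def inner_sum_left inner_sum_right)
  also have "\<dots> = (\<Sum>a\<in>UNIV. \<Sum>b\<in>UNIV. Y a b * X a b)"
  proof (intro sum.cong refl arg_cong[where f = "(*) _"])
    fix a b
    have "(\<Sum>c\<in>UNIV. \<Sum>d\<in>UNIV. X c d * ((f c \<bullet> f a) * (f d \<bullet> f b)))
        = (\<Sum>c\<in>UNIV. \<Sum>d\<in>UNIV. if d = b then (if c = a then X c d else 0) else 0)"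
      by (intro sum.cong) (auto simp: orthonormal_onD[OF f])
    then show "(\<Sum>c\<in>UNIV. \<Sum>d\<in>UNIV. X c d * ((f c \<bullet> f a) * (f d \<bullet> f b))) = X a b"
      by simp
  qed
  finally show ?thesis by (simp add: mult.commute)
qed

lemma frame_matrix_S20:
  assumes f: "orthonormal_on UNIV f"
    and sym: "\<And>a b. X a b = X b a" and tr: "(\<Sum>a\<in>UNIV. X a a) = 0"
  shows "S20 (frame_matrix f X)"
proof -
  have entry: "frame_matrix f X $ i $ j = (\<Sum>a\<in>UNIV. \<Sum>b\<in>UNIV. X a b * (f a $ i * f b $ j))" for i j
    unfolding frame_matrix_def outer_def by (simp add: sum_component)
  have "frame_matrix f X $ i $ j = frame_matrix f X $ j $ i" for i j
    unfolding entry by (subst sum.swap) (simp add: sym algebra_simps)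
  moreover have "(\<Sum>i\<in>UNIV. frame_matrix f X $ i $ i) = (\<Sum>a\<in>UNIV. \<Sum>b\<in>UNIV. X a b * (f a \<bullet> f b))"
    unfolding entry inner_vec_def inner_real_def sum_distrib_left
    by (subst sum.swap) (rule sum.cong[OF refl], rule sum.swap)
  moreover have "\<dots> = 0"
    using tr by (simp add: orthonormal_onD[OF f] if_distrib cong: if_cong)
  ultimately show ?thesis unfolding S20_def by auto
qed

lemma Rbar_frame_matrix_inner:
  "Rbar R (frame_matrix f X) \<bullet> frame_matrix f X = curv_form (frame_tensor R f) X"
proof -
  have "Rbar R (outer z w) \<bullet> outer x y = curv_eval R x z w y" for x y z w
    unfolding Rbar_def outer_def curv_eval_def
    by (simp add: inner_vec_def sum_distrib_left sum_distrib_right algebra_simps)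
      (subst (2) sum.swap, subst (3) sum.swap, simp add: ac_simps)
  moreover have "Rbar R (frame_matrix f X) = (\<Sum>c\<in>UNIV. \<Sum>d\<in>UNIV. X c d *\<^sub>R Rbar R (outer (f c) (f d)))"
    using linear_Rbar unfolding frame_matrix_def by (simp add: linear_sum linear_scale o_def)
  ultimately show ?thesis
    by (simp add: frame_matrix_def curv_form_def frame_tensor_def inner_sum_left inner_sum_right sum_distrib_left)
qed

lemma orthonormal_frame_matrices:
  assumes f: "orthonormal_on UNIV f"
  shows "orthonormal_on {1..9} (\<lambda>n. frame_matrix f (frame_basis n))"
    "(\<lambda>n. frame_matrix f (frame_basis n)) ` {1..9} \<subseteq> {h. S20 h}"
  using frame_basis_orthonormal frame_basis_symmetric frame_basis_traceless
  by (auto simp: orthonormal_on_def frame_matrix_inner[OF f] intro!: frame_matrix_S20[OF f])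

definition sym_unit_matrix :: "4 \<Rightarrow> 4 \<Rightarrow> mat4" where
  "sym_unit_matrix p q = (\<chi> i j. sym_unit p q i j)"

definition diag_unit_matrix :: "4 \<Rightarrow> mat4" where
  "diag_unit_matrix p = (\<chi> i j. if i = j then (if i = 1 then 1 else if i = p then -1 else 0) else 0)"

lemma S20_decomposition:
  assumes "S20 h"
  shows "h = h$1$2 *\<^sub>R sym_unit_matrix 1 2 + h$1$3 *\<^sub>R sym_unit_matrix 1 3
    + h$1$4 *\<^sub>R sym_unit_matrix 1 4 + h$2$3 *\<^sub>R sym_unit_matrix 2 3
    + h$2$4 *\<^sub>R sym_unit_matrix 2 4 + h$3$4 *\<^sub>R sym_unit_matrix 3 4
    - h$2$2 *\<^sub>R diag_unit_matrix 2 - h$3$3 *\<^sub>R diag_unit_matrix 3 - h$4$4 *\<^sub>R diag_unit_matrix 4"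
proof -
  have "h$i$j = h$j$i" for i j
    using assms unfolding S20_def by auto
  moreover have "h$1$1 = - h$2$2 - h$3$3 - h$4$4"
    using assms unfolding S20_def by (auto simp: sum_4)
  moreover have "i = 1 \<or> i = 2 \<or> i = 3 \<or> i = 4" for i :: 4
    using exhaust_4 by blast
  ultimately show ?thesis
    unfolding vec_eq_iff by (auto simp: sym_unit_matrix_def diag_unit_matrix_def sym_unit_def)
qed

lemma dim_S20: "dim {h. S20 h} = 9"
proof (rule antisym)
  define B where "B = [sym_unit_matrix 1 2, sym_unit_matrix 1 3, sym_unit_matrix 1 4, sym_unit_matrix 2 3,
    sym_unit_matrix 2 4, sym_unit_matrix 3 4, diag_unit_matrix 2, diag_unit_matrix 3, diag_unit_matrix 4]"
  have "{h. S20 h} \<subseteq> span (set B)"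
  proof
    fix h assume "h \<in> {h. S20 h}"
    then show "h \<in> span (set B)"
      by (subst S20_decomposition) (simp_all add: B_def span_base span_add span_diff span_scale)
  qed
  then have "dim {h. S20 h} \<le> card (set B)" by (rule dim_le_card) simp
  also have "\<dots> \<le> 9" using card_length[of B] by (simp add: B_def)
  finally show "dim {h. S20 h} \<le> 9" .
  have axis: "orthonormal_on UNIV (\<lambda>a. axis a (1::real) :: real^4)"
    by (simp add: orthonormal_on_def inner_axis_axis)
  show "9 \<le> dim {h. S20 h}"
    using orthonormal_on_card_le_dim[OF orthonormal_frame_matrices[OF axis]] by simp
qed

section \<open>Isotropic curvature and the cones\<close>

lemma sorted_eigenvalues_mono: "sorted_eigenvalues A lam \<Longrightarrow> mono_on {1..9} lam"
  unfolding sorted_eigenvalues_def mono_on_def by auto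

lemma sorted_eigenvalues_exist:
  assumes A: "sym_op_S20 A" and lin: "linear A"
  obtains lam where "sorted_eigenvalues A lam"
proof -
  have "\<exists>H lam. (\<forall>i<(9::nat). H i \<in> {h. S20 h} \<and> A (H i) = lam i *\<^sub>R H i) \<and> orthonormal_on {..<9} H \<and>
      (\<forall>i<9. \<forall>x\<in>{h. S20 h}. (\<forall>j<i. x \<bullet> H j = 0) \<longrightarrow> lam i * (x \<bullet> x) \<le> A x \<bullet> x)"
    using A by (intro self_adjoint_orthonormal_eigenvectors subspace_S20 lin)
      (auto simp: sym_op_S20_def mat_inner_eq_inner dim_S20)
  then obtain H lam where eig: "\<forall>i<(9::nat). S20 (H i) \<and> A (H i) = lam i *\<^sub>R H i"
    and on: "orthonormal_on {..<9} H"
    and min: "\<forall>i<9. \<forall>x. S20 x \<longrightarrow> (\<forall>j<i. x \<bullet> H j = 0) \<longrightarrow> lam i * (x \<bullet> x) \<le> A x \<bullet> x"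
    by auto
  have "lam (a - 1) \<le> lam (b - 1)" if "1 \<le> a" "a \<le> b" "b \<le> (9::nat)" for a b
  proof -
    define x where "x = H (b - 1)"
    have x: "S20 x" "A x = lam (b - 1) *\<^sub>R x" "x \<bullet> x = 1"
      using that eig orthonormal_onD[OF on] by (auto simp: x_def)
    have "\<forall>j<a - 1. x \<bullet> H j = 0"
      using that orthonormal_onD[OF on] by (auto simp: x_def)
    then have "lam (a - 1) * (x \<bullet> x) \<le> A x \<bullet> x" using min[rule_format, of "a - 1" x] that x(1) by simp
    then show ?thesis using x by simp
  qed
  moreover have "mat_inner (H (a - 1)) (H (b - 1)) = (if a = b then 1 else 0)" if "a \<in> {1..9}" "b \<in> {1..9}" for a b
    using that on by (auto simp: mat_inner_eq_inner orthonormal_on_def)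
  ultimately have "sorted_eigenvalues A (\<lambda>a. lam (a - 1))"
    unfolding sorted_eigenvalues_def using eig
    by (intro conjI exI[of _ "\<lambda>a. H (a - 1)"]) auto
  then show ?thesis by (rule that)
qed

definition frame4 :: "real^4 \<Rightarrow> real^4 \<Rightarrow> real^4 \<Rightarrow> real^4 \<Rightarrow> 4 \<Rightarrow> real^4" where
  "frame4 e1 e2 e3 e4 a = (if a = 1 then e1 else if a = 2 then e2 else if a = 3 then e3 else e4)"

lemma orthonormal_on_frame4:
  assumes "orthonormal4 e1 e2 e3 e4"
  shows "orthonormal_on UNIV (frame4 e1 e2 e3 e4)"
proof -
  have "e1 \<bullet> e1 = 1" "e2 \<bullet> e2 = 1" "e3 \<bullet> e3 = 1" "e4 \<bullet> e4 = 1"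
    "e1 \<bullet> e2 = 0" "e1 \<bullet> e3 = 0" "e1 \<bullet> e4 = 0" "e2 \<bullet> e3 = 0" "e2 \<bullet> e4 = 0" "e3 \<bullet> e4 = 0"
    using assms unfolding orthonormal4_def Let_def by (auto simp: less_Suc_eq numeral_eq_Suc)
  moreover have "a = 1 \<or> a = 2 \<or> a = 3 \<or> a = 4" for a :: 4
    using exhaust_4 by blast
  ultimately show ?thesis
    unfolding orthonormal_on_def frame4_def by (auto simp: inner_commute)
qed

lemma isotropic_expr_ge_eigenvalues:
  assumes R: "alg_curv R" and lam: "sorted_eigenvalues (Rring R) lam"
    and e: "orthonormal4 e1 e2 e3 e4"
  shows "2 * (avg_eig lam + (lam 1 + lam 2 + lam 3) / 3) \<le> isotropic_expr R e1 e2 e3 e4"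
proof -
  define V where "V = {h. S20 h}"
  define f where "f = frame4 e1 e2 e3 e4"
  define G where "G = (\<lambda>n. frame_matrix f (frame_basis n))"
  define Q where "Q n = curv_form (frame_tensor R f) (frame_basis n)" for n
  obtain H where H: "\<forall>a\<in>{1..9}. S20 (H a) \<and> Rring R (H a) = lam a *\<^sub>R H a"
    "orthonormal_on {1..9} H"
    using lam unfolding sorted_eigenvalues_def orthonormal_on_def mat_inner_eq_inner by blast
  then have Hbasis: "orthonormal_basis V {1..9} H"
    by (auto simp: orthonormal_basis_def V_def subspace_S20 dim_S20)
  have f: "orthonormal_on UNIV f" unfolding f_def by (rule orthonormal_on_frame4[OF e])
  have Gbasis: "orthonormal_basis V {1..9} G"
    using orthonormal_frame_matrices[OF f]
    by (auto simp: orthonormal_basis_def V_def G_def subspace_S20 dim_S20)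
  have Q: "Rring R (G n) \<bullet> G n = Q n" if "n \<in> {1..9}" for n
  proof -
    have "S20 (G n)" using orthonormal_frame_matrices(2)[OF f] that unfolding G_def by blast
    then show ?thesis
      by (simp add: G_def Q_def Rring_def inner_proj_traceless Rbar_frame_matrix_inner)
  qed
  have iso: "isotropic_expr R e1 e2 e3 e4 = 2 / 9 * (\<Sum>n = 1..9. Q n) + 2 / 3 * (\<Sum>n = 1..3. Q n)"
    using isotropic_curv_form_identity[OF alg_curv_frame_tensor[OF R, of f]]
    by (simp add: Q_def isotropic_expr_def frame_tensor_def f_def frame4_def)
  have eig: "Rring R (H i) = lam i *\<^sub>R H i" if "i \<in> {1..9}" for i
    using H(1) that by blast
  have "(\<Sum>n = 1..9. Q n) = (\<Sum>n = 1..9. Rring R (G n) \<bullet> G n)" using Q by simp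
  also have "\<dots> = (\<Sum>n = 1..9. lam n)"
    by (rule trace_orthonormal_basis[OF Hbasis Gbasis linear_Rring eig])
  finally have trace: "(\<Sum>n = 1..9. Q n) = 9 * avg_eig lam" by (simp add: avg_eig_def)
  have "(\<Sum>n = 1..3. lam n) \<le> (\<Sum>n = 1..3. Rring R (G n) \<bullet> G n)"
    by (rule ky_fan_partial_trace[OF Hbasis Gbasis linear_Rring eig sorted_eigenvalues_mono[OF lam]]) simp_all
  then have "lam 1 + lam 2 + lam 3 \<le> (\<Sum>n = 1..3. Q n)" using Q by (simp add: numeral_eq_Suc)
  with trace show ?thesis unfolding iso by simp
qed

lemma eigenvalue_sign_of_cone:
  assumes lam: "sorted_eigenvalues A lam"
    and regime: "(1 \<le> \<alpha> \<and> \<alpha> \<le> 3 \<and> \<theta> = 1) \<or> (3 \<le> \<alpha> \<and> \<alpha> < 9 \<and> \<theta> = 9 / \<alpha> - 2)"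
  shows "in_cone A \<alpha> \<theta> \<Longrightarrow> 0 \<le> avg_eig lam + (lam 1 + lam 2 + lam 3) / 3"
    and "in_cone_interior A \<alpha> \<theta> \<Longrightarrow> 0 < avg_eig lam + (lam 1 + lam 2 + lam 3) / 3"
proof -
  define S where "S = avg_eig lam + (lam 1 + lam 2 + lam 3) / 3"
  obtain c where c: "0 < c" "partial_eig_sum lam \<alpha> / \<alpha> + \<theta> * avg_eig lam \<le> c * S"
    using partial_eig_sum_cone_bound[OF sorted_eigenvalues_mono[OF lam] regime] unfolding S_def .
  show "0 \<le> S" if "in_cone A \<alpha> \<theta>"
  proof -
    have "0 \<le> c * S" using that lam c(2) unfolding in_cone_def by fastforce
    then show ?thesis using c(1) by (simp add: zero_le_mult_iff)
  qed
  show "0 < S" if "in_cone_interior A \<alpha> \<theta>"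
  proof -
    have "0 < c * S" using that lam c(2) unfolding in_cone_interior_def by fastforce
    then show ?thesis using c(1) by (simp add: zero_less_mult_iff)
  qed
qed

lemma nonneg_IC_if_in_cone:
  assumes R: "alg_curv R" and cone: "in_cone (Rring R) \<alpha> \<theta>"
    and regime: "(1 \<le> \<alpha> \<and> \<alpha> \<le> 3 \<and> \<theta> = 1) \<or> (3 \<le> \<alpha> \<and> \<alpha> < 9 \<and> \<theta> = 9 / \<alpha> - 2)"
  shows "nonneg_IC R"
proof -
  obtain lam where lam: "sorted_eigenvalues (Rring R) lam"
    using sorted_eigenvalues_exist[OF _ linear_Rring] cone unfolding in_cone_def by blast
  have "0 \<le> avg_eig lam + (lam 1 + lam 2 + lam 3) / 3"
    by (rule eigenvalue_sign_of_cone(1)[OF lam regime cone])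
  with isotropic_expr_ge_eigenvalues[OF R lam] show ?thesis
    unfolding nonneg_IC_def by (meson mult_nonneg_nonneg order_trans zero_le_numeral)
qed

lemma pos_IC_if_in_cone_interior:
  assumes R: "alg_curv R" and cone: "in_cone_interior (Rring R) \<alpha> \<theta>"
    and regime: "(1 \<le> \<alpha> \<and> \<alpha> \<le> 3 \<and> \<theta> = 1) \<or> (3 \<le> \<alpha> \<and> \<alpha> < 9 \<and> \<theta> = 9 / \<alpha> - 2)"
  shows "pos_IC R"
proof -
  obtain lam where lam: "sorted_eigenvalues (Rring R) lam"
    using sorted_eigenvalues_exist[OF _ linear_Rring] cone unfolding in_cone_interior_def by blast
  have "0 < avg_eig lam + (lam 1 + lam 2 + lam 3) / 3"
    by (rule eigenvalue_sign_of_cone(2)[OF lam regime cone])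
  with isotropic_expr_ge_eigenvalues[OF R lam] show ?thesis
    unfolding pos_IC_def by (meson mult_pos_pos order_less_le_trans zero_less_numeral)
qed

theorem proposition4p2:
  fixes R :: tensor4 and \<alpha> :: real
  assumes "alg_curv R"
  shows "(((1 \<le> \<alpha> \<and> \<alpha> \<le> 3 \<and> in_cone (Rring R) \<alpha> 1) \<or>
          (3 \<le> \<alpha> \<and> \<alpha> < 9 \<and> in_cone (Rring R) \<alpha> (9 / \<alpha> - 2))) \<longrightarrow> nonneg_IC R) \<and>
         (((1 \<le> \<alpha> \<and> \<alpha> \<le> 3 \<and> in_cone_interior (Rring R) \<alpha> 1) \<or>
          (3 \<le> \<alpha> \<and> \<alpha> < 9 \<and> in_cone_interior (Rring R) \<alpha> (9 / \<alpha> - 2))) \<longrightarrow> pos_IC R)"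
  using nonneg_IC_if_in_cone[OF assms] pos_IC_if_in_cone_interior[OF assms] by blast

end
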